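(* Let $A$ be a commutative noetherian local ring and let $x,y\in A$ be a regular exact pair of zero divisors. Let $a,b\in A$ be such that $a$ or $b$ is weakly regular on the $A$-module $A/(x,y)$. Then there are $A$-module isomorphisms (a) $\operatorname{Hom}_A(H_a,G_b)\cong\operatorname{Hom}_A(H_b,G_a)\cong G_{ab}$, and (b) $\operatorname{Hom}_A(G_a,H_b)\cong\operatorname{Hom}_A(G_b,H_a)\cong H_{ab}$.
   Context: Two non-units $x,y\in A$ form an exact pair of zero divisors if $\operatorname{Ann}_A(x)=(y)$ and $\operatorname{Ann}_A(y)=(x)$; such a pair is regular if $(x)\cap(y)=0$. An element $a\in A$ is weakly regular on a module $M$ if multiplication by $a$ on $M$ is injective. For $a\in A$, let $\gamma_a=\begin{pmatrix} x & a\\ 0 & y\end{pmatrix}$ and $\eta_a=\begin{pmatrix} y & -a\\ 0 & x\end{pmatrix}$, viewed as $A$-linear maps $A^2\to A^2$ acting on column vectors, and set $G_a=\operatorname{Coker}\gamma_a$, $H_a=\operatorname{Coker}\eta_a$. *)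

theory Defs
  imports Main "HOL-Library.FuncSet"
begin

definition is_ideal :: "'a::comm_ring_1 set \<Rightarrow> bool" where
  "is_ideal I \<longleftrightarrow> 0 \<in> I \<and> (\<forall>u\<in>I. \<forall>v\<in>I. u + v \<in> I) \<and> (\<forall>r. \<forall>u\<in>I. r * u \<in> I)"

definition gen_ideal :: "'a::comm_ring_1 set \<Rightarrow> 'a set" where
  "gen_ideal S = {t. \<exists>c. t = (\<Sum>s\<in>S. c s * s)}"

definition finitely_generated_ideal :: "'a::comm_ring_1 set \<Rightarrow> bool" where
  "finitely_generated_ideal I \<longleftrightarrow> (\<exists>S. finite S \<and> I = gen_ideal S)"

definition noetherian_ring :: "'a::comm_ring_1 itself \<Rightarrow> bool" where
  "noetherian_ring _ \<longleftrightarrow> (\<forall>I::'a set. is_ideal I \<longrightarrow> finitely_generated_ideal I)"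

definition maximal_ideal :: "'a::comm_ring_1 set \<Rightarrow> bool" where
  "maximal_ideal m \<longleftrightarrow> is_ideal m \<and> m \<noteq> UNIV \<and>
     (\<forall>J. is_ideal J \<and> m \<subseteq> J \<longrightarrow> J = m \<or> J = UNIV)"

definition local_ring :: "'a::comm_ring_1 itself \<Rightarrow> bool" where
  "local_ring _ \<longleftrightarrow> (\<exists>!m::'a set. maximal_ideal m)"

definition principal_ideal :: "'a::comm_ring_1 \<Rightarrow> 'a set" where
  "principal_ideal x = {x * r | r. True}"

definition Ann :: "'a::comm_ring_1 \<Rightarrow> 'a set" where
  "Ann x = {r. r * x = 0}"

definition exact_pair_zero_divisors :: "'a::comm_ring_1 \<Rightarrow> 'a \<Rightarrow> bool" where
  "exact_pair_zero_divisors x y \<longleftrightarrow> \<not> x dvd 1 \<and> \<not> y dvd 1 \<and>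
     Ann x = principal_ideal y \<and> Ann y = principal_ideal x"

definition regular_exact_pair :: "'a::comm_ring_1 \<Rightarrow> 'a \<Rightarrow> bool" where
  "regular_exact_pair x y \<longleftrightarrow> exact_pair_zero_divisors x y \<and>
     principal_ideal x \<inter> principal_ideal y = {0}"

record ('a, 'm) amod =
  mcarr :: "'m set"
  madd  :: "'m \<Rightarrow> 'm \<Rightarrow> 'm"
  mzero :: "'m"
  mscal :: "'a \<Rightarrow> 'm \<Rightarrow> 'm"

definition free1 :: "('a::comm_ring_1, 'a) amod" where
  "free1 = \<lparr>mcarr = UNIV, madd = (+), mzero = 0, mscal = (*)\<rparr>"

definition free2 :: "('a::comm_ring_1, 'a \<times> 'a) amod" where
  "free2 = \<lparr>mcarr = UNIV,
            madd = (\<lambda>(p1, p2) (q1, q2). (p1 + q1, p2 + q2)),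
            mzero = (0, 0),
            mscal = (\<lambda>r (p1, p2). (r * p1, r * p2))\<rparr>"

definition quot_mod :: "('a, 'm) amod \<Rightarrow> 'm set \<Rightarrow> ('a, 'm set) amod" where
  "quot_mod M N = \<lparr>mcarr = {{q \<in> mcarr M. \<exists>n\<in>N. q = madd M p n} | p. p \<in> mcarr M},
     madd = (\<lambda>X Y. {q \<in> mcarr M. \<exists>p\<in>X. \<exists>p'\<in>Y. \<exists>n\<in>N. q = madd M (madd M p p') n}),
     mzero = {q \<in> mcarr M. \<exists>n\<in>N. q = madd M (mzero M) n},
     mscal = (\<lambda>r X. {q \<in> mcarr M. \<exists>p\<in>X. \<exists>n\<in>N. q = madd M (mscal M r p) n})\<rparr>"

definition is_linear :: "('a, 'm) amod \<Rightarrow> ('a, 'n) amod \<Rightarrow> ('m \<Rightarrow> 'n) \<Rightarrow> bool" where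
  "is_linear M N f \<longleftrightarrow> (\<forall>m\<in>mcarr M. f m \<in> mcarr N) \<and>
     (\<forall>m1\<in>mcarr M. \<forall>m2\<in>mcarr M. f (madd M m1 m2) = madd N (f m1) (f m2)) \<and>
     (\<forall>r. \<forall>m\<in>mcarr M. f (mscal M r m) = mscal N r (f m))"

definition Hom_mod :: "('a, 'm) amod \<Rightarrow> ('a, 'n) amod \<Rightarrow> ('a, 'm \<Rightarrow> 'n) amod" where
  "Hom_mod M N = \<lparr>mcarr = {f \<in> mcarr M \<rightarrow>\<^sub>E mcarr N. is_linear M N f},
     madd = (\<lambda>f g. \<lambda>m\<in>mcarr M. madd N (f m) (g m)),
     mzero = (\<lambda>m\<in>mcarr M. mzero N),
     mscal = (\<lambda>r f. \<lambda>m\<in>mcarr M. mscal N r (f m))\<rparr>"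

definition mod_iso :: "('a, 'm) amod \<Rightarrow> ('a, 'n) amod \<Rightarrow> bool" where
  "mod_iso M N \<longleftrightarrow> (\<exists>f. is_linear M N f \<and> bij_betw f (mcarr M) (mcarr N))"

definition weakly_regular :: "'a \<Rightarrow> ('a, 'm) amod \<Rightarrow> bool" where
  "weakly_regular a M \<longleftrightarrow> (\<forall>m\<in>mcarr M. mscal M a m = mzero M \<longrightarrow> m = mzero M)"

definition coker2 :: "('a::comm_ring_1 \<times> 'a \<Rightarrow> 'a \<times> 'a) \<Rightarrow> ('a, ('a \<times> 'a) set) amod" where
  "coker2 f = quot_mod free2 (range f)"

text \<open>gamma_a = [[x, a],[0, y]] and eta_a = [[y, -a],[0, x]] acting on column vectors.\<close>
definition gamma :: "'a::comm_ring_1 \<Rightarrow> 'a \<Rightarrow> 'a \<Rightarrow> 'a \<times> 'a \<Rightarrow> 'a \<times> 'a" where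
  "gamma x y a = (\<lambda>(u, v). (x * u + a * v, y * v))"

definition eta :: "'a::comm_ring_1 \<Rightarrow> 'a \<Rightarrow> 'a \<Rightarrow> 'a \<times> 'a \<Rightarrow> 'a \<times> 'a" where
  "eta x y a = (\<lambda>(u, v). (y * u - a * v, x * v))"

definition G_mod :: "'a::comm_ring_1 \<Rightarrow> 'a \<Rightarrow> 'a \<Rightarrow> ('a, ('a \<times> 'a) set) amod" where
  "G_mod x y a = coker2 (gamma x y a)"

definition H_mod :: "'a::comm_ring_1 \<Rightarrow> 'a \<Rightarrow> 'a \<Rightarrow> ('a, ('a \<times> 'a) set) amod" where
  "H_mod x y a = coker2 (eta x y a)"

definition ideal2 :: "'a::comm_ring_1 \<Rightarrow> 'a \<Rightarrow> 'a set" where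
  "ideal2 x y = {x * r + y * s | r s. True}"

definition quot_ring_mod :: "'a::comm_ring_1 \<Rightarrow> 'a \<Rightarrow> ('a, 'a set) amod" where
  "quot_ring_mod x y = quot_mod free1 (ideal2 x y)"

end

theory Submission
  imports Defs "HOL-Library.Product_Plus"
begin

text \<open>
  The class of \<open>(P, Q)\<close> in \<open>G\<^sub>a\<^sub>b\<close> defines the homomorphism \<open>H\<^sub>a \<rightarrow> G\<^sub>b\<close> sending the two
  generators of \<open>H\<^sub>a\<close> to the classes of \<open>(0, x Q)\<close> and \<open>(P, a Q)\<close>; this is well defined because
  \<open>x y = 0\<close>. Since \<open>H\<^sub>a\<close> is presented by \<open>\<eta>\<^sub>a\<close>, a homomorphism \<open>H\<^sub>a \<rightarrow> G\<^sub>b\<close> is a pair \<open>c, d\<close> in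
  \<open>G\<^sub>b\<close> with \<open>y c = 0\<close> and \<open>x d = a c\<close>, and injectivity and surjectivity of the map become
  explicit computations with \<open>Ann x = (y)\<close>, \<open>Ann y = (x)\<close> and \<open>(x) \<inter> (y) = 0\<close>. Surjectivity
  needs one more input: the second coordinate \<open>d\<^sub>1\<close> of \<open>c\<close> satisfies \<open>a d\<^sub>1, b d\<^sub>1 \<in> (x, y)\<close>, so
  \<open>d\<^sub>1 \<in> (x, y)\<close> by weak regularity of \<open>a\<close> or \<open>b\<close>. The statements about \<open>H\<close> follow by exchanging
  \<open>x\<close> and \<open>y\<close>, because \<open>\<eta>\<close> with parameter \<open>c\<close> for the pair \<open>(x, y)\<close> is \<open>\<gamma>\<close> with parameter \<open>-c\<close> for
  the pair \<open>(y, x)\<close>.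
\<close>

definition std_module :: "('a \<Rightarrow> 'm \<Rightarrow> 'm) \<Rightarrow> ('a, 'm::ab_group_add) amod" where
  "std_module s = \<lparr>mcarr = UNIV, madd = (+), mzero = 0, mscal = s\<rparr>"

definition scale2 :: "'a::comm_ring_1 \<Rightarrow> 'a \<times> 'a \<Rightarrow> 'a \<times> 'a" where
  "scale2 r p = (r * fst p, r * snd p)"

lemma scale2_simps [simp]:
  "scale2 r (u, v) = (r * u, r * v)"
  "scale2 r (p + q) = scale2 r p + scale2 r q"
  "scale2 r (p - q) = scale2 r p - scale2 r q"
  "scale2 0 p = 0"
  by (simp_all add: scale2_def algebra_simps zero_prod_def)

lemma free1_eq_std_module: "free1 = std_module (*)"
  by (simp add: free1_def std_module_def)

lemma free2_eq_std_module: "free2 = std_module scale2"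
  by (simp add: free2_def std_module_def fun_eq_iff scale2_def zero_prod_def split: prod.split)

definition submodule :: "('a \<Rightarrow> 'm \<Rightarrow> 'm) \<Rightarrow> 'm::ab_group_add set \<Rightarrow> bool" where
  "submodule s N \<longleftrightarrow> 0 \<in> N \<and> (\<forall>u\<in>N. \<forall>v\<in>N. u - v \<in> N) \<and> (\<forall>r. \<forall>u\<in>N. s r u \<in> N)"

lemma submodule_0: "submodule s N \<Longrightarrow> 0 \<in> N"
  and submodule_diff: "submodule s N \<Longrightarrow> u \<in> N \<Longrightarrow> v \<in> N \<Longrightarrow> u - v \<in> N"
  and submodule_scal: "submodule s N \<Longrightarrow> u \<in> N \<Longrightarrow> s r u \<in> N"
  by (simp_all add: submodule_def)

lemma submodule_add: "submodule s N \<Longrightarrow> u \<in> N \<Longrightarrow> v \<in> N \<Longrightarrow> u + v \<in> N"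
  using submodule_diff[of s N u "0 - v"] submodule_diff[of s N 0 v] submodule_0[of s N] by simp

definition coset :: "'m::ab_group_add set \<Rightarrow> 'm \<Rightarrow> 'm set" where
  "coset N p = {q. \<exists>n\<in>N. q = p + n}"

lemma mem_coset_iff: "q \<in> coset N p \<longleftrightarrow> q - p \<in> N"
  by (auto simp: coset_def algebra_simps intro: bexI[of _ "q - p"])

lemma coset_self: "submodule s N \<Longrightarrow> p \<in> coset N p"
  by (simp add: mem_coset_iff submodule_0)

lemma coset_eq_iff:
  assumes "submodule s N"
  shows "coset N p = coset N q \<longleftrightarrow> p - q \<in> N"
proof
  assume "coset N p = coset N q"
  then show "p - q \<in> N" using coset_self[OF assms, of p] by (simp add: mem_coset_iff)
next
  assume pq: "p - q \<in> N"
  have "r - p \<in> N \<longleftrightarrow> r - q \<in> N" for r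
    using submodule_add[OF assms _ pq, of "r - p"] submodule_diff[OF assms _ pq, of "r - q"]
    by (auto simp: algebra_simps)
  then show "coset N p = coset N q" by (auto simp: mem_coset_iff)
qed

lemma some_in_coset: "submodule s N \<Longrightarrow> (SOME q. q \<in> coset N p) - p \<in> N"
  using someI[of "\<lambda>q. q \<in> coset N p", OF coset_self] by (simp add: mem_coset_iff)

lemma quot_std_carrier: "mcarr (quot_mod (std_module s) N) = range (coset N)"
  by (auto simp: quot_mod_def std_module_def coset_def)

lemma quot_std_zero: "mzero (quot_mod (std_module s) N) = coset N 0"
  by (simp add: quot_mod_def std_module_def coset_def)

lemma quot_std_add:
  assumes "submodule s N"
  shows "madd (quot_mod (std_module s) N) (coset N p) (coset N q) = coset N (p + q)"
proof -
  have "(\<exists>p'\<in>coset N p. \<exists>q'\<in>coset N q. \<exists>n\<in>N. r = p' + q' + n) \<longleftrightarrow> r - (p + q) \<in> N" for r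
  proof
    assume "\<exists>p'\<in>coset N p. \<exists>q'\<in>coset N q. \<exists>n\<in>N. r = p' + q' + n"
    then obtain p' q' n where "p' - p \<in> N" "q' - q \<in> N" "n \<in> N" "r = p' + q' + n"
      by (metis mem_coset_iff)
    moreover from \<open>r = p' + q' + n\<close> have "r - (p + q) = (p' - p) + (q' - q) + n"
      by (simp add: algebra_simps)
    ultimately show "r - (p + q) \<in> N" using submodule_add[OF assms] by metis
  next
    assume "r - (p + q) \<in> N"
    then have "r = p + q + (r - (p + q))" "p \<in> coset N p" "q \<in> coset N q"
      using coset_self[OF assms] by simp_all
    then show "\<exists>p'\<in>coset N p. \<exists>q'\<in>coset N q. \<exists>n\<in>N. r = p' + q' + n"
      using \<open>r - (p + q) \<in> N\<close> by blast
  qed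
  then have "{r \<in> UNIV. \<exists>p'\<in>coset N p. \<exists>q'\<in>coset N q. \<exists>n\<in>N. r = p' + q' + n} = coset N (p + q)"
    by (intro set_eqI) (simp only: mem_Collect_eq UNIV_I simp_thms mem_coset_iff[of _ N "p + q"])
  then show ?thesis
    by (simp add: quot_mod_def std_module_def)
qed

lemma quot_std_scal:
  assumes "submodule s N" and scal_add: "\<And>p q. s r (p + q) = s r p + s r q"
  shows "mscal (quot_mod (std_module s) N) r (coset N p) = coset N (s r p)"
proof -
  have scal_diff: "s r p' - s r p = s r (p' - p)" for p'
    using scal_add[of "p' - p" p] by simp
  have "(\<exists>p'\<in>coset N p. \<exists>n\<in>N. q = s r p' + n) \<longleftrightarrow> q - s r p \<in> N" for q
  proof
    assume "\<exists>p'\<in>coset N p. \<exists>n\<in>N. q = s r p' + n"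
    then obtain p' n where "p' - p \<in> N" "n \<in> N" "q = s r p' + n"
      by (metis mem_coset_iff)
    then have "q - s r p = s r (p' - p) + n"
      using scal_diff[of p'] by (simp add: algebra_simps)
    then show "q - s r p \<in> N"
      using submodule_add[OF assms(1) submodule_scal[OF assms(1)]] \<open>p' - p \<in> N\<close> \<open>n \<in> N\<close>
      by simp
  next
    assume "q - s r p \<in> N"
    moreover have "p \<in> coset N p" using coset_self[OF assms(1)] .
    moreover have "q = s r p + (q - s r p)" by simp
    ultimately show "\<exists>p'\<in>coset N p. \<exists>n\<in>N. q = s r p' + n" by blast
  qed
  then have "{q \<in> UNIV. \<exists>p'\<in>coset N p. \<exists>n\<in>N. q = s r p' + n} = coset N (s r p)"
    by (intro set_eqI) (simp only: mem_Collect_eq UNIV_I simp_thms mem_coset_iff[of _ N "s r p"])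
  then show ?thesis
    by (simp add: quot_mod_def std_module_def)
qed

definition closed_mod :: "('a, 'm) amod \<Rightarrow> bool" where
  "closed_mod M \<longleftrightarrow> (\<forall>m1\<in>mcarr M. \<forall>m2\<in>mcarr M. madd M m1 m2 \<in> mcarr M) \<and>
     (\<forall>r. \<forall>m\<in>mcarr M. mscal M r m \<in> mcarr M)"

lemma closed_quot_std:
  assumes "submodule s N" and "\<And>r p q. s r (p + q) = s r p + s r q"
  shows "closed_mod (quot_mod (std_module s) N)"
  unfolding closed_mod_def quot_std_carrier
  using quot_std_add[OF assms(1)] quot_std_scal[OF assms] by auto

lemma mod_iso_trans:
  assumes "mod_iso M N" and "mod_iso N K"
  shows "mod_iso M K"
proof -
  obtain f g where "is_linear M N f" "bij_betw f (mcarr M) (mcarr N)"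
    and "is_linear N K g" "bij_betw g (mcarr N) (mcarr K)"
    using assms unfolding mod_iso_def by blast
  then have "is_linear M K (g \<circ> f)" "bij_betw (g \<circ> f) (mcarr M) (mcarr K)"
    by (auto simp: is_linear_def intro: bij_betw_trans)
  then show ?thesis unfolding mod_iso_def by blast
qed

lemma mod_iso_sym:
  assumes "mod_iso M N" and "closed_mod M"
  shows "mod_iso N M"
proof -
  obtain f where f: "is_linear M N f" "bij_betw f (mcarr M) (mcarr N)"
    using assms(1) unfolding mod_iso_def by blast
  define g where "g = the_inv_into (mcarr M) f"
  have g: "bij_betw g (mcarr N) (mcarr M)"
    unfolding g_def using f(2) by (rule bij_betw_the_inv_into)
  have g_f: "g (f m) = m" if "m \<in> mcarr M" for m
    unfolding g_def using f(2) that by (simp add: bij_betw_def the_inv_into_f_f)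
  have f_g: "f (g n) = n" and g_in: "g n \<in> mcarr M" if "n \<in> mcarr N" for n
    using g f(2) that unfolding g_def
    by (auto simp: bij_betw_def f_the_inv_into_f)
  have "is_linear N M g"
    unfolding is_linear_def
  proof (intro conjI ballI allI)
    fix n1 n2 assume n: "n1 \<in> mcarr N" "n2 \<in> mcarr N"
    have "g (madd N n1 n2) = g (f (madd M (g n1) (g n2)))"
      using f(1) n by (simp add: is_linear_def g_in f_g)
    then show "g (madd N n1 n2) = madd M (g n1) (g n2)"
      using assms(2) n by (simp add: closed_mod_def g_in g_f)
  next
    fix r n assume n: "n \<in> mcarr N"
    have "g (mscal N r n) = g (f (mscal M r (g n)))"
      using f(1) n by (simp add: is_linear_def g_in f_g)
    then show "g (mscal N r n) = mscal M r (g n)"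
      using assms(2) n by (simp add: closed_mod_def g_in g_f)
  qed (simp add: g_in)
  then show ?thesis using g unfolding mod_iso_def by blast
qed

lemma quot_free2_carrier: "mcarr (quot_mod free2 N) = range (coset N)"
  by (simp add: free2_eq_std_module quot_std_carrier)

lemma quot_free2_add:
  "submodule scale2 N \<Longrightarrow> madd (quot_mod free2 N) (coset N p) (coset N q) = coset N (p + q)"
  by (simp add: free2_eq_std_module quot_std_add)

lemma quot_free2_scal:
  "submodule scale2 N \<Longrightarrow> mscal (quot_mod free2 N) r (coset N p) = coset N (scale2 r p)"
  by (simp add: free2_eq_std_module quot_std_scal)

lemma closed_quot_free2: "submodule scale2 N \<Longrightarrow> closed_mod (quot_mod free2 N)"
  unfolding free2_eq_std_module by (rule closed_quot_std) simp_all

lemma Hom_mod_free2_on_coset: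
  assumes "submodule scale2 S" and "\<phi> \<in> mcarr (Hom_mod (quot_mod free2 S) M)"
  shows "\<phi> (coset S (u, v)) =
    madd M (mscal M u (\<phi> (coset S (1, 0)))) (mscal M v (\<phi> (coset S (0, 1))))"
proof -
  let ?Q = "quot_mod free2 S"
  have lin: "is_linear ?Q M \<phi>"
    using assms(2) by (simp add: Hom_mod_def)
  have in_Q: "coset S w \<in> mcarr ?Q" for w by (simp add: quot_free2_carrier)
  have "coset S (u, v) = madd ?Q (coset S (u, 0)) (coset S (0, v))"
    "coset S (u, 0) = mscal ?Q u (coset S (1, 0))" "coset S (0, v) = mscal ?Q v (coset S (0, 1))"
    by (simp_all add: quot_free2_add quot_free2_scal assms(1))
  then show ?thesis
    using lin in_Q unfolding is_linear_def by metis
qed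

lemma regular_exact_pair_commute: "regular_exact_pair y x \<longleftrightarrow> regular_exact_pair x y"
  by (auto simp: regular_exact_pair_def exact_pair_zero_divisors_def)

lemma regular_exact_pair_mult_eq_0:
  assumes "regular_exact_pair x y"
  shows "x * y = 0"
proof -
  have "y \<in> Ann x"
    using assms by (auto simp: regular_exact_pair_def exact_pair_zero_divisors_def
        principal_ideal_def intro: exI[of _ 1])
  then show ?thesis by (simp add: Ann_def mult.commute)
qed

lemma regular_exact_pair_annihilator:
  assumes "regular_exact_pair x y" and "r * x = 0"
  shows "\<exists>s. r = y * s"
proof -
  have "r \<in> Ann x" using assms(2) by (simp add: Ann_def)
  then show ?thesis
    using assms(1) by (auto simp: regular_exact_pair_def exact_pair_zero_divisors_def principal_ideal_def)
qed

lemma regular_exact_pair_common_multiple: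
  assumes "regular_exact_pair x y" and "x * r = y * s"
  shows "x * r = 0"
proof -
  have "x * r \<in> principal_ideal x \<inter> principal_ideal y"
    using assms(2) unfolding principal_ideal_def by (auto simp: eq_commute)
  then show ?thesis using assms(1) by (auto simp: regular_exact_pair_def)
qed

lemma submodule_ideal2: "submodule (*) (ideal2 x y)"
  unfolding submodule_def ideal2_def
proof (intro conjI ballI allI)
  have "0 = x * 0 + y * 0" by simp
  then show "0 \<in> {x * r + y * s |r s. True}" by blast
next
  fix u v assume "u \<in> {x * r + y * s |r s. True}" "v \<in> {x * r + y * s |r s. True}"
  then obtain r s r' s' where "u = x * r + y * s" "v = x * r' + y * s'" by blast
  then have "u - v = x * (r - r') + y * (s - s')" by (simp add: algebra_simps)
  then show "u - v \<in> {x * r + y * s |r s. True}" by blast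
next
  fix c u assume "u \<in> {x * r + y * s |r s. True}"
  then obtain r s where "u = x * r + y * s" by blast
  then have "c * u = x * (c * r) + y * (c * s)" by (simp add: algebra_simps)
  then show "c * u \<in> {x * r + y * s |r s. True}" by blast
qed

lemma ideal2_commute: "ideal2 y x = ideal2 x y"
  unfolding ideal2_def by (auto simp: add.commute)

definition regular_modulo :: "'a::comm_ring_1 set \<Rightarrow> 'a \<Rightarrow> bool" where
  "regular_modulo I c \<longleftrightarrow> (\<forall>r. c * r \<in> I \<longrightarrow> r \<in> I)"

lemma regular_modulo_uminus:
  assumes "submodule (*) I"
  shows "regular_modulo I (- c) \<longleftrightarrow> regular_modulo I c"
proof -
  have "(- c) * r \<in> I \<longleftrightarrow> c * r \<in> I" for r
    using submodule_scal[OF assms, of "c * r" "-1"] submodule_scal[OF assms, of "(- c) * r" "-1"]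
    by auto
  then show ?thesis unfolding regular_modulo_def by simp
qed

lemma weakly_regular_quotient_imp_regular_modulo:
  assumes "submodule (*) I" and "weakly_regular c (quot_mod free1 I)"
  shows "regular_modulo I c"
  unfolding regular_modulo_def
proof (intro allI impI)
  fix r assume "c * r \<in> I"
  then have "mscal (quot_mod free1 I) c (coset I r) = mzero (quot_mod free1 I)"
    using assms(1) unfolding free1_eq_std_module
    by (simp add: quot_std_scal distrib_left quot_std_zero coset_eq_iff[OF assms(1)])
  then have "coset I r = coset I 0"
    using assms(2) unfolding weakly_regular_def free1_eq_std_module quot_std_carrier quot_std_zero by blast
  then show "r \<in> I" using coset_eq_iff[OF assms(1)] by simp
qed

lemma eta_eq_gamma_commute: "eta x y c = gamma y x (- c)"
  by (simp add: fun_eq_iff eta_def gamma_def)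

lemma mem_range_gamma: "p \<in> range (gamma x y c) \<longleftrightarrow> (\<exists>u v. p = (x * u + c * v, y * v))"
  by (auto simp: gamma_def image_iff)

lemma submodule_range_gamma: "submodule scale2 (range (gamma x y c))"
  unfolding submodule_def
proof (intro conjI ballI allI)
  have "(0::'a \<times> 'a) = (x * 0 + c * 0, y * 0)" by (simp add: zero_prod_def)
  then show "0 \<in> range (gamma x y c)" unfolding mem_range_gamma by blast
next
  fix p q assume "p \<in> range (gamma x y c)" "q \<in> range (gamma x y c)"
  then obtain u v u' v' where "p = (x * u + c * v, y * v)" "q = (x * u' + c * v', y * v')"
    unfolding mem_range_gamma by blast
  then have "p - q = (x * (u - u') + c * (v - v'), y * (v - v'))" by (simp add: algebra_simps)
  then show "p - q \<in> range (gamma x y c)" unfolding mem_range_gamma by blast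
next
  fix r p assume "p \<in> range (gamma x y c)"
  then obtain u v where "p = (x * u + c * v, y * v)" unfolding mem_range_gamma by blast
  then have "scale2 r p = (x * (r * u) + c * (r * v), y * (r * v))" by (simp add: algebra_simps)
  then show "scale2 r p \<in> range (gamma x y c)" unfolding mem_range_gamma by blast
qed

lemma range_eta_eq: "range (eta x y c) = range (gamma y x (- c))"
  by (simp add: eta_eq_gamma_commute)

lemma mem_range_eta: "p \<in> range (eta x y c) \<longleftrightarrow> (\<exists>u v. p = (y * u - c * v, x * v))"
  by (auto simp: eta_def image_iff)

locale coset_pairing =
  fixes B :: "'a::comm_ring_1 \<times> 'a \<Rightarrow> 'a \<times> 'a \<Rightarrow> 'a \<times> 'a"
    and D S T :: "('a \<times> 'a) set"
  assumes submodule_D: "submodule scale2 D"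
    and submodule_S: "submodule scale2 S"
    and submodule_T: "submodule scale2 T"
    and pairing_add_left: "B (p + q) w = B p w + B q w"
    and pairing_scale_left: "B (scale2 r p) w = scale2 r (B p w)"
    and pairing_expand_right: "B p (u, v) = scale2 u (B p (1, 0)) + scale2 v (B p (0, 1))"
    and pairing_left_in: "p \<in> D \<Longrightarrow> B p w \<in> T"
    and pairing_right_in: "w \<in> S \<Longrightarrow> B p w \<in> T"
begin

abbreviation "QD \<equiv> quot_mod free2 D"
abbreviation "QS \<equiv> quot_mod free2 S"
abbreviation "QT \<equiv> quot_mod free2 T"

lemma pairing_diff_left: "B p w - B q w = B (p - q) w"
  using pairing_add_left[of "p - q" q w] by simp

lemma pairing_add_right: "B p (w + w') = B p w + B p w'"
proof -
  obtain u v u' v' where "w = (u, v)" "w' = (u', v')" by fastforce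
  then show ?thesis
    using pairing_expand_right[of p u v] pairing_expand_right[of p u' v']
      pairing_expand_right[of p "u + u'" "v + v'"]
    by (simp add: scale2_def algebra_simps)
qed

lemma pairing_scale_right: "B p (scale2 r w) = scale2 r (B p w)"
proof -
  obtain u v where "w = (u, v)" by fastforce
  then show ?thesis
    using pairing_expand_right[of p u v] pairing_expand_right[of p "r * u" "r * v"]
    by (simp add: scale2_def algebra_simps)
qed

lemma pairing_diff_right: "B p w - B p w' = B p (w - w')"
  using pairing_add_right[of p "w - w'" w'] by simp

definition induced :: "('a \<times> 'a) set \<Rightarrow> ('a \<times> 'a) set \<Rightarrow> ('a \<times> 'a) set" where
  "induced X = (\<lambda>Y\<in>mcarr QS. coset T (B (SOME p. p \<in> X) (SOME w. w \<in> Y)))"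

lemma induced_coset: "induced (coset D p) (coset S w) = coset T (B p w)"
proof -
  define p' where "p' = (SOME q. q \<in> coset D p)"
  define w' where "w' = (SOME q. q \<in> coset S w)"
  have "B p' w' - B p w = B (p' - p) w' + B p (w' - w)"
    by (simp flip: pairing_diff_left pairing_diff_right)
  moreover have "B (p' - p) w' \<in> T" "B p (w' - w) \<in> T"
    using pairing_left_in pairing_right_in some_in_coset submodule_D submodule_S
    unfolding p'_def w'_def by blast+
  ultimately have "B p' w' - B p w \<in> T"
    using submodule_add[OF submodule_T] by simp
  then show ?thesis
    by (simp add: induced_def quot_free2_carrier p'_def w'_def coset_eq_iff[OF submodule_T])
qed

lemma induced_in_Hom:
  assumes "X \<in> mcarr QD"
  shows "induced X \<in> mcarr (Hom_mod QS QT)"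
proof -
  obtain p where X: "X = coset D p" using assms by (auto simp: quot_free2_carrier)
  have "is_linear QS QT (induced X)"
    unfolding is_linear_def quot_free2_carrier
    by (auto simp: X induced_coset quot_free2_add quot_free2_scal submodule_S submodule_T
        pairing_add_right pairing_scale_right)
  then show ?thesis
    by (auto simp: Hom_mod_def induced_def quot_free2_carrier)
qed

lemma extensional_on_cosets_eqI:
  assumes "f \<in> extensional (mcarr QS)" "g \<in> extensional (mcarr QS)"
    and "\<And>w. f (coset S w) = g (coset S w)"
  shows "f = g"
  using assms by (intro extensionalityI[of f "mcarr QS"]) (auto simp: quot_free2_carrier)

lemma linear_induced: "is_linear QD (Hom_mod QS QT) induced"
  unfolding is_linear_def
proof (intro conjI ballI allI)
  fix X assume "X \<in> mcarr QD"
  then show "induced X \<in> mcarr (Hom_mod QS QT)" by (rule induced_in_Hom)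
next
  fix X X' assume "X \<in> mcarr QD" "X' \<in> mcarr QD"
  then obtain p p' where X: "X = coset D p" "X' = coset D p'" by (auto simp: quot_free2_carrier)
  have "induced (coset D (p + p')) (coset S w) =
      madd QT (induced (coset D p) (coset S w)) (induced (coset D p') (coset S w))" for w
    by (simp add: induced_coset quot_free2_add submodule_T pairing_add_left)
  then show "induced (madd QD X X') = madd (Hom_mod QS QT) (induced X) (induced X')"
    unfolding X quot_free2_add[OF submodule_D]
    by (intro extensional_on_cosets_eqI) (simp_all add: Hom_mod_def induced_def quot_free2_carrier)
next
  fix r X assume "X \<in> mcarr QD"
  then obtain p where X: "X = coset D p" by (auto simp: quot_free2_carrier)
  have "induced (coset D (scale2 r p)) (coset S w) = mscal QT r (induced (coset D p) (coset S w))" for w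
    by (simp add: induced_coset quot_free2_scal submodule_T pairing_scale_left)
  then show "induced (mscal QD r X) = mscal (Hom_mod QS QT) r (induced X)"
    unfolding X quot_free2_scal[OF submodule_D]
    by (intro extensional_on_cosets_eqI) (simp_all add: Hom_mod_def induced_def quot_free2_carrier)
qed

lemma inj_on_induced:
  assumes "\<And>p. B p (1, 0) \<in> T \<Longrightarrow> B p (0, 1) \<in> T \<Longrightarrow> p \<in> D"
  shows "inj_on induced (mcarr QD)"
proof (rule inj_onI)
  fix X X' assume "X \<in> mcarr QD" "X' \<in> mcarr QD" and eq: "induced X = induced X'"
  then obtain p p' where X: "X = coset D p" "X' = coset D p'" by (auto simp: quot_free2_carrier)
  have "coset T (B p w) = coset T (B p' w)" for w
    using eq unfolding X by (metis induced_coset)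
  then have "B (p - p') w \<in> T" for w
    by (simp add: coset_eq_iff[OF submodule_T] pairing_diff_left)
  then have "p - p' \<in> D" using assms by blast
  then show "X = X'" unfolding X by (simp add: coset_eq_iff[OF submodule_D])
qed

lemma induced_surj:
  assumes "\<And>c d. (\<And>u v. (u, v) \<in> S \<Longrightarrow> scale2 u c + scale2 v d \<in> T) \<Longrightarrow>
    \<exists>p. c - B p (1, 0) \<in> T \<and> d - B p (0, 1) \<in> T"
  shows "mcarr (Hom_mod QS QT) \<subseteq> induced ` mcarr QD"
proof
  fix \<phi> assume \<phi>: "\<phi> \<in> mcarr (Hom_mod QS QT)"
  have "\<phi> (coset S w) \<in> range (coset T)" for w
    using \<phi> by (auto simp: Hom_mod_def quot_free2_carrier dest!: PiE_mem)
  then obtain c d where c: "\<phi> (coset S (1, 0)) = coset T c" and d: "\<phi> (coset S (0, 1)) = coset T d"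
    by (metis imageE)
  have \<phi>_coset: "\<phi> (coset S (u, v)) = coset T (scale2 u c + scale2 v d)" for u v
    using Hom_mod_free2_on_coset[OF submodule_S \<phi>]
    by (simp add: c d quot_free2_add quot_free2_scal submodule_T)
  have "scale2 u c + scale2 v d \<in> T" if "(u, v) \<in> S" for u v
  proof -
    have "coset S (u, v) = coset S (0, 0)"
      using that by (simp add: coset_eq_iff[OF submodule_S])
    then have "coset T (scale2 u c + scale2 v d) = coset T 0"
      using \<phi>_coset[of u v] \<phi>_coset[of 0 0] by simp
    then show ?thesis by (simp add: coset_eq_iff[OF submodule_T])
  qed
  then obtain p where p: "c - B p (1, 0) \<in> T" "d - B p (0, 1) \<in> T"
    using assms by blast
  have agree: "\<phi> (coset S w) = induced (coset D p) (coset S w)" for w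
  proof -
    obtain u v where w: "w = (u, v)" by fastforce
    have "scale2 u (c - B p (1, 0)) + scale2 v (d - B p (0, 1)) \<in> T"
      using p by (intro submodule_add[OF submodule_T] submodule_scal[OF submodule_T])
    moreover have "scale2 u c + scale2 v d - B p (u, v) =
        scale2 u (c - B p (1, 0)) + scale2 v (d - B p (0, 1))"
      by (simp add: pairing_expand_right[of p u v])
    ultimately have "scale2 u c + scale2 v d - B p (u, v) \<in> T" by (simp only:)
    then show ?thesis
      by (simp add: w \<phi>_coset induced_coset coset_eq_iff[OF submodule_T])
  qed
  have "\<phi> \<in> extensional (mcarr QS)" "induced (coset D p) \<in> extensional (mcarr QS)"
    using \<phi> by (simp_all add: Hom_mod_def PiE_def induced_def)
  then have "\<phi> = induced (coset D p)"
    using agree by (rule extensional_on_cosets_eqI)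
  then show "\<phi> \<in> induced ` mcarr QD" by (simp add: quot_free2_carrier)
qed

theorem mod_iso_induced:
  assumes "\<And>p. B p (1, 0) \<in> T \<Longrightarrow> B p (0, 1) \<in> T \<Longrightarrow> p \<in> D"
    and "\<And>c d. (\<And>u v. (u, v) \<in> S \<Longrightarrow> scale2 u c + scale2 v d \<in> T) \<Longrightarrow>
      \<exists>p. c - B p (1, 0) \<in> T \<and> d - B p (0, 1) \<in> T"
  shows "mod_iso QD (Hom_mod QS QT)"
proof -
  have "bij_betw induced (mcarr QD) (mcarr (Hom_mod QS QT))"
    using inj_on_induced[OF assms(1)] induced_surj[OF assms(2)] induced_in_Hom
    by (auto simp: bij_betw_def)
  then show ?thesis using linear_induced unfolding mod_iso_def by blast
qed

end

definition gamma_pairing :: "'a::comm_ring_1 \<Rightarrow> 'a \<Rightarrow> 'a \<Rightarrow> 'a \<times> 'a \<Rightarrow> 'a \<times> 'a \<Rightarrow> 'a \<times> 'a" where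
  "gamma_pairing e x a p w = (snd w * fst p, e * (fst w * x * snd p + snd w * a * snd p))"

lemma gamma_pairing_basis:
  "gamma_pairing e x a (P, Q) (1, 0) = (0, e * x * Q)"
  "gamma_pairing e x a (P, Q) (0, 1) = (P, e * a * Q)"
  by (simp_all add: gamma_pairing_def)

lemma coset_pairing_gamma_pairing:
  assumes xy: "x * y = 0"
  shows "coset_pairing (gamma_pairing e x a)
    (range (gamma x y (e * (a * b)))) (range (eta x y a)) (range (gamma x y b))"
proof
  fix p w :: "'a \<times> 'a" assume "p \<in> range (gamma x y (e * (a * b)))"
  then obtain u v where p: "p = (x * u + e * (a * b) * v, y * v)"
    unfolding mem_range_gamma by blast
  have "fst w * x * (y * v) = (x * y) * (fst w * v)" by (simp add: algebra_simps)
  then have "gamma_pairing e x a p w = (x * (snd w * u) + b * (e * a * snd w * v), y * (e * a * snd w * v))"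
    using xy by (simp add: p gamma_pairing_def algebra_simps)
  then show "gamma_pairing e x a p w \<in> range (gamma x y b)"
    unfolding mem_range_gamma by blast
next
  fix p w :: "'a \<times> 'a" assume "w \<in> range (eta x y a)"
  then obtain s t where w: "w = (y * s - a * t, x * t)"
    unfolding mem_range_eta by blast
  have "(y * s - a * t) * x * snd p + x * t * a * snd p = (x * y) * (s * snd p)"
    by (simp add: algebra_simps)
  then have "gamma_pairing e x a p w = (x * (t * fst p) + b * 0, y * 0)"
    using xy by (simp add: w gamma_pairing_def algebra_simps)
  then show "gamma_pairing e x a p w \<in> range (gamma x y b)"
    unfolding mem_range_gamma by blast
qed (simp_all add: submodule_range_gamma range_eta_eq gamma_pairing_def scale2_def algebra_simps)

lemma range_gamma_mult_of_pairing:
  assumes xy: "regular_exact_pair x y" and e: "e * e = 1"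
    and h1: "(0, e * x * Q) \<in> range (gamma x y b)" and h2: "(P, e * a * Q) \<in> range (gamma x y b)"
  shows "(P, Q) \<in> range (gamma x y (e * (a * b)))"
proof -
  have yx: "regular_exact_pair y x" using xy by (simp add: regular_exact_pair_commute)
  obtain v1 where "e * x * Q = y * v1" using h1 unfolding mem_range_gamma by auto
  then have "x * (e * Q) = 0"
    using regular_exact_pair_common_multiple[OF xy] by (metis mult.assoc mult.left_commute)
  then obtain w where w: "e * Q = y * w"
    using regular_exact_pair_annihilator[OF xy] by (metis mult.commute)
  obtain u2 v2 where P: "P = x * u2 + b * v2" and v2: "e * a * Q = y * v2"
    using h2 unfolding mem_range_gamma by auto
  have "(v2 - a * w) * y = y * v2 - a * (y * w)" by (simp add: algebra_simps)
  also have "\<dots> = e * a * Q - a * (e * Q)" using v2 w by simp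
  also have "\<dots> = 0" by (simp add: algebra_simps)
  finally obtain r where r: "v2 - a * w = x * r"
    using regular_exact_pair_annihilator[OF yx] by blast
  have Q: "Q = y * (e * w)"
    using e w by (metis mult.assoc mult.commute mult_1)
  have "e * (a * b) * (e * w) = (e * e) * (a * b * w)" by (simp add: algebra_simps)
  then have "P = x * (u2 + b * r) + e * (a * b) * (e * w)"
    using P r e by (simp add: algebra_simps eq_diff_eq)
  then show ?thesis using Q unfolding mem_range_gamma by blast
qed

lemma pairing_relations_imp_mem_ideal2:
  assumes xy: "regular_exact_pair x y"
    and reg: "regular_modulo (ideal2 x y) a \<or> regular_modulo (ideal2 x y) b"
    and h1: "(y * c1, y * d1) \<in> range (gamma x y b)"
    and h2: "(- a * c1 + x * c2, - a * d1 + x * d2) \<in> range (gamma x y b)"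
  shows "d1 \<in> ideal2 x y"
proof -
  obtain s t where st: "y * c1 = x * s + b * t" "y * d1 = y * t"
    using h1 unfolding mem_range_gamma by auto
  have "(d1 - t) * y = 0" using st(2) by (simp add: algebra_simps)
  then obtain r where "d1 - t = x * r"
    using regular_exact_pair_annihilator xy regular_exact_pair_commute by blast
  then have "b * d1 = x * (b * r - s) + y * c1"
    using st(1) by (simp add: algebra_simps eq_diff_eq)
  then have "b * d1 \<in> ideal2 x y" unfolding ideal2_def by blast
  moreover obtain t2 where "- a * d1 + x * d2 = y * t2"
    using h2 unfolding mem_range_gamma by auto
  then have "a * d1 = x * d2 + y * (- t2)" by (simp add: algebra_simps eq_neg_iff_add_eq_0)
  then have "a * d1 \<in> ideal2 x y" unfolding ideal2_def by blast
  ultimately show ?thesis using reg unfolding regular_modulo_def by blast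
qed

lemma pairing_relations_lift:
  assumes xy: "regular_exact_pair x y" and e: "e * e = 1"
    and d1: "d1 \<in> ideal2 x y"
    and h1: "(y * c1, y * d1) \<in> range (gamma x y b)"
    and h2: "(- a * c1 + x * c2, - a * d1 + x * d2) \<in> range (gamma x y b)"
  shows "\<exists>P Q. (c1, d1 - e * x * Q) \<in> range (gamma x y b) \<and>
    (c2 - P, d2 - e * a * Q) \<in> range (gamma x y b)"
proof -
  have yx: "regular_exact_pair y x" using xy by (simp add: regular_exact_pair_commute)
  obtain s t where st: "y * c1 = x * s + b * t" "y * d1 = y * t"
    using h1 unfolding mem_range_gamma by auto
  have "(d1 - t) * y = 0" using st(2) by (simp add: algebra_simps)
  then obtain r where "d1 - t = x * r"
    using regular_exact_pair_annihilator[OF yx] by blast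
  then have t: "t = d1 - x * r" by (simp add: algebra_simps)
  obtain q v where qv: "d1 = x * q + y * v" using d1 unfolding ideal2_def by blast
  have "x * (s - b * r + b * q) = y * (c1 - b * v)"
    using st(1) qv by (simp add: t algebra_simps)
  then have "(c1 - b * v) * y = 0"
    using regular_exact_pair_common_multiple[OF xy] by (metis mult.commute)
  then obtain k where k: "c1 - b * v = x * k"
    using regular_exact_pair_annihilator[OF yx] by blast
  obtain t2 where t2: "- a * d1 + x * d2 = y * t2"
    using h2 unfolding mem_range_gamma by auto
  have "x * (d2 - a * q) = y * (t2 + a * v)"
    using t2 qv by (simp add: algebra_simps)
  then have "(d2 - a * q) * x = 0"
    using regular_exact_pair_common_multiple[OF xy] by (metis mult.commute)
  then obtain m where m: "d2 - a * q = y * m"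
    using regular_exact_pair_annihilator[OF xy] by blast
  have "e * x * (e * q) = (e * e) * (x * q)" "e * a * (e * q) = (e * e) * (a * q)"
    by (simp_all add: algebra_simps)
  then have "e * x * (e * q) = x * q" "e * a * (e * q) = a * q"
    using e by simp_all
  then have "(c1, d1 - e * x * (e * q)) = (x * k + b * v, y * v)"
    "(c2 - (c2 - b * m), d2 - e * a * (e * q)) = (x * 0 + b * m, y * m)"
    using k qv m by (simp_all add: algebra_simps eq_diff_eq)
  then show ?thesis unfolding mem_range_gamma by blast
qed

text \<open>The sign \<open>e\<close> serves the exchange of \<open>x\<close> and \<open>y\<close>: for the pair \<open>(y, x)\<close>, the elements
  \<open>-a\<close>, \<open>-b\<close> and \<open>e = -1\<close>, the left-hand side becomes \<open>H\<^sub>a\<^sub>b\<close>.\<close>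

lemma coker_gamma_mod_iso_Hom:
  assumes xy: "regular_exact_pair x y" and e: "e * e = 1"
    and reg: "regular_modulo (ideal2 x y) a \<or> regular_modulo (ideal2 x y) b"
  shows "mod_iso (coker2 (gamma x y (e * (a * b))))
    (Hom_mod (coker2 (eta x y a)) (coker2 (gamma x y b)))"
proof -
  interpret coset_pairing "gamma_pairing e x a"
    "range (gamma x y (e * (a * b)))" "range (eta x y a)" "range (gamma x y b)"
    using coset_pairing_gamma_pairing regular_exact_pair_mult_eq_0[OF xy] .
  have "mod_iso QD (Hom_mod QS QT)"
  proof (rule mod_iso_induced)
    fix p :: "'a \<times> 'a"
    assume "gamma_pairing e x a p (1, 0) \<in> range (gamma x y b)"
      and "gamma_pairing e x a p (0, 1) \<in> range (gamma x y b)"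
    then show "p \<in> range (gamma x y (e * (a * b)))"
      using range_gamma_mult_of_pairing[OF xy e] by (cases p) (simp add: gamma_pairing_basis)
  next
    fix c d :: "'a \<times> 'a"
    assume rel: "\<And>u v. (u, v) \<in> range (eta x y a) \<Longrightarrow> scale2 u c + scale2 v d \<in> range (gamma x y b)"
    obtain c1 d1 c2 d2 where cd: "c = (c1, d1)" "d = (c2, d2)" by fastforce
    have "(y, 0) = eta x y a (1, 0)" "(- a, x) = eta x y a (0, 1)"
      by (simp_all add: eta_def)
    then have h1: "(y * c1, y * d1) \<in> range (gamma x y b)"
      and h2: "(- a * c1 + x * c2, - a * d1 + x * d2) \<in> range (gamma x y b)"
      using rel[of y 0] rel[of "- a" x] by (simp_all add: cd)
    obtain P Q where "(c1, d1 - e * x * Q) \<in> range (gamma x y b)"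
        "(c2 - P, d2 - e * a * Q) \<in> range (gamma x y b)"
      using pairing_relations_lift[OF xy e pairing_relations_imp_mem_ideal2[OF xy reg h1 h2] h1 h2]
      by blast
    then show "\<exists>p. c - gamma_pairing e x a p (1, 0) \<in> range (gamma x y b) \<and>
        d - gamma_pairing e x a p (0, 1) \<in> range (gamma x y b)"
      by (intro exI[of _ "(P, Q)"]) (simp add: cd gamma_pairing_basis)
  qed
  then show ?thesis unfolding coker2_def .
qed

lemma G_mod_iso_Hom_H_G:
  assumes "regular_exact_pair x y"
    and "regular_modulo (ideal2 x y) a \<or> regular_modulo (ideal2 x y) b"
  shows "mod_iso (G_mod x y (a * b)) (Hom_mod (H_mod x y a) (G_mod x y b))"
  using coker_gamma_mod_iso_Hom[OF assms(1) _ assms(2), of 1]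
  by (simp add: G_mod_def H_mod_def)

lemma H_mod_iso_Hom_G_H:
  assumes "regular_exact_pair x y"
    and "regular_modulo (ideal2 x y) a \<or> regular_modulo (ideal2 x y) b"
  shows "mod_iso (H_mod x y (a * b)) (Hom_mod (G_mod x y a) (H_mod x y b))"
proof -
  have "regular_modulo (ideal2 y x) (- a) \<or> regular_modulo (ideal2 y x) (- b)"
    using assms(2) by (simp add: ideal2_commute regular_modulo_uminus[OF submodule_ideal2])
  then have "mod_iso (coker2 (gamma y x (- 1 * (- a * - b))))
      (Hom_mod (coker2 (eta y x (- a))) (coker2 (gamma y x (- b))))"
    using assms(1) by (intro coker_gamma_mod_iso_Hom) (simp_all add: regular_exact_pair_commute)
  then show ?thesis
    by (simp add: G_mod_def H_mod_def eta_eq_gamma_commute)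
qed

theorem theorem7p5:
  fixes x y a b :: "'a::comm_ring_1"
  assumes "noetherian_ring TYPE('a)"
    and "local_ring TYPE('a)"
    and "regular_exact_pair x y"
    and "weakly_regular a (quot_ring_mod x y) \<or> weakly_regular b (quot_ring_mod x y)"
  shows "mod_iso (Hom_mod (H_mod x y a) (G_mod x y b)) (Hom_mod (H_mod x y b) (G_mod x y a))
       \<and> mod_iso (Hom_mod (H_mod x y b) (G_mod x y a)) (G_mod x y (a * b))
       \<and> mod_iso (Hom_mod (G_mod x y a) (H_mod x y b)) (Hom_mod (G_mod x y b) (H_mod x y a))
       \<and> mod_iso (Hom_mod (G_mod x y b) (H_mod x y a)) (H_mod x y (a * b))"
proof -
  have reg_ab: "regular_modulo (ideal2 x y) a \<or> regular_modulo (ideal2 x y) b"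
    using assms(4) weakly_regular_quotient_imp_regular_modulo[OF submodule_ideal2]
    unfolding quot_ring_mod_def by blast
  then have reg_ba: "regular_modulo (ideal2 x y) b \<or> regular_modulo (ideal2 x y) a" by blast
  have G: "mod_iso (G_mod x y (a * b)) (Hom_mod (H_mod x y a) (G_mod x y b))"
    "mod_iso (G_mod x y (a * b)) (Hom_mod (H_mod x y b) (G_mod x y a))"
    using G_mod_iso_Hom_H_G[OF assms(3) reg_ab] G_mod_iso_Hom_H_G[OF assms(3) reg_ba]
    by (simp_all add: mult.commute)
  have H: "mod_iso (H_mod x y (a * b)) (Hom_mod (G_mod x y a) (H_mod x y b))"
    "mod_iso (H_mod x y (a * b)) (Hom_mod (G_mod x y b) (H_mod x y a))"
    using H_mod_iso_Hom_G_H[OF assms(3) reg_ab] H_mod_iso_Hom_G_H[OF assms(3) reg_ba]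
    by (simp_all add: mult.commute)
  have closed: "closed_mod (G_mod x y (a * b))" "closed_mod (H_mod x y (a * b))"
    unfolding G_mod_def H_mod_def coker2_def range_eta_eq
    by (simp_all add: closed_quot_free2 submodule_range_gamma)
  have G': "mod_iso (Hom_mod (H_mod x y a) (G_mod x y b)) (G_mod x y (a * b))"
    "mod_iso (Hom_mod (H_mod x y b) (G_mod x y a)) (G_mod x y (a * b))"
    using G closed(1) by (simp_all add: mod_iso_sym)
  moreover have H': "mod_iso (Hom_mod (G_mod x y a) (H_mod x y b)) (H_mod x y (a * b))"
    "mod_iso (Hom_mod (G_mod x y b) (H_mod x y a)) (H_mod x y (a * b))"
    using H closed(2) by (simp_all add: mod_iso_sym)
  ultimately show ?thesis
    using mod_iso_trans[OF G'(1) G(2)] mod_iso_trans[OF H'(1) H(2)] by blast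
qed

end
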